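(* Let $s_\theta$ be the Sturmian word of irrational slope $\theta\in(0,1)$. For every $m\ge1$, every $1\le k\le m$, and every ordered partition $P_k=(p_1,\dots,p_k)$ of $m$, the set $\mathcal{L}_{(m,k)}$ of $P_k$-partitioned factors of length $m$ of $s_\theta$ admits exactly $k+1$ varieties.
   Context: For irrational $\theta\in(0,1)$, $s_\theta=s_0s_1s_2\cdots$ is the infinite word over $\{a<b\}$ with $s_n=a$ if $\{n\theta\}\in[0,1-\theta)$ and $s_n=b$ if $\{n\theta\}\in[1-\theta,1)$, where $\{x\}$ denotes the fractional part. A factor of length $m$ is a word $s_j\cdots s_{j+m-1}$, $j\ge0$; $\mathcal{L}_m$ is the set of factors of length $m$. For an ordered partition $P_k=(p_1,\dots,p_k)$ of $m$ (positive integers summing to $m$), $\mathcal{L}_{(m,k)}$ is the set of factorizations $u=u_1\cdots u_k$, $|u_i|=p_i$, of the $u\in\mathcal{L}_m$. The height profile of $u$ is $\langle |u_1|_b,\dots,|u_k|_b\rangle$ ($|v|_b$ = number of $b$'s in $v$); partitioned factors with equal height profiles are of the same variety, and varieties are the equivalence classes. *)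

theory Defs
  imports Complex_Main
begin

datatype letter = a | b

definition sturm :: "real \<Rightarrow> nat \<Rightarrow> letter" where
  "sturm \<theta> n = (if frac (real n * \<theta>) < 1 - \<theta> then a else b)"

definition factor_at :: "real \<Rightarrow> nat \<Rightarrow> nat \<Rightarrow> letter list" where
  "factor_at \<theta> j m = map (sturm \<theta>) [j..<j+m]"

definition factors :: "real \<Rightarrow> nat \<Rightarrow> letter list set" where
  "factors \<theta> m = {factor_at \<theta> j m | j. True}"

definition ordered_partition :: "nat list \<Rightarrow> nat \<Rightarrow> nat \<Rightarrow> bool" where
  "ordered_partition ps m k \<longleftrightarrow> length ps = k \<and> (\<forall>p\<in>set ps. 0 < p) \<and> sum_list ps = m"

fun split_by :: "nat list \<Rightarrow> 'x list \<Rightarrow> 'x list list" where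
  "split_by [] u = []"
| "split_by (p # ps) u = take p u # split_by ps (drop p u)"

definition partitioned_factors :: "real \<Rightarrow> nat list \<Rightarrow> letter list list set" where
  "partitioned_factors \<theta> ps = split_by ps ` factors \<theta> (sum_list ps)"

definition count_b :: "letter list \<Rightarrow> nat" where
  "count_b v = length (filter (\<lambda>x. x = b) v)"

definition height_profile :: "letter list list \<Rightarrow> nat list" where
  "height_profile us = map count_b us"

definition varieties :: "real \<Rightarrow> nat list \<Rightarrow> letter list list set set" where
  "varieties \<theta> ps = (\<lambda>h. {U \<in> partitioned_factors \<theta> ps. height_profile U = h})
                        ` (height_profile ` partitioned_factors \<theta> ps)"

end

theory Submission
  imports Defs "HOL-Analysis.Kronecker_Approximation_Theorem"
begin

text \<open>The number of b's in the factor of length p at position j is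
  \<open>\<lfloor>(j+p)\<theta>\<rfloor> - \<lfloor>j\<theta>\<rfloor>\<close>. Writing \<open>x = frac (j\<theta>)\<close> and \<open>c\<^sub>0 = 0 < c\<^sub>1 < \<dots> < c\<^sub>k = m\<close> for
  the partial sums of the partition, the height profile is therefore the list of increments of
  \<open>i \<mapsto> \<lfloor>x + c\<^sub>i\<theta>\<rfloor>\<close>, and \<open>\<lfloor>x + c\<theta>\<rfloor> = \<lfloor>c\<theta>\<rfloor> + [1 - frac (c\<theta>) \<le> x]\<close>. Hence two positions have
  the same profile iff the same thresholds \<open>1 - frac (c\<^sub>i\<theta>)\<close>, \<open>i = 1..k\<close>, lie below their
  \<open>x\<close>, i.e. iff the same number of them does. By irrationality these k thresholds are distinct
  points of (0,1), so that number ranges over \<open>0..k\<close>, and by Kronecker's density theorem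
  every value is attained.\<close>

lemma floor_Suc_mult_sturm:
  assumes "0 < \<theta>" "\<theta> < 1"
  shows "\<lfloor>real (Suc n) * \<theta>\<rfloor> = \<lfloor>real n * \<theta>\<rfloor> + (if sturm \<theta> n = b then 1 else 0)"
proof -
  have "real (Suc n) * \<theta> = real n * \<theta> + \<theta>" by (simp add: algebra_simps)
  moreover have "frac \<theta> = \<theta>" "\<lfloor>\<theta>\<rfloor> = 0" using assms by (auto simp: frac_eq floor_eq_iff)
  ultimately show ?thesis using assms by (auto simp: floor_add sturm_def)
qed

lemma count_b_factor_at:
  assumes "0 < \<theta>" "\<theta> < 1"
  shows "int (count_b (factor_at \<theta> j p)) = \<lfloor>real (j + p) * \<theta>\<rfloor> - \<lfloor>real j * \<theta>\<rfloor>"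
proof (induction p)
  case 0
  then show ?case by (simp add: factor_at_def count_b_def)
next
  case (Suc p)
  have "factor_at \<theta> j (Suc p) = factor_at \<theta> j p @ [sturm \<theta> (j + p)]"
    by (simp add: factor_at_def)
  then show ?case using Suc floor_Suc_mult_sturm[OF assms, of "j + p"]
    by (simp add: count_b_def)
qed

lemma take_factor_at: "take p (factor_at \<theta> i (p + s)) = factor_at \<theta> i p"
  by (simp add: factor_at_def take_map add.assoc)

lemma drop_factor_at: "drop p (factor_at \<theta> i (p + s)) = factor_at \<theta> (i + p) s"
  by (simp add: factor_at_def drop_map add.assoc)

lemma floor_add_nat_mult:
  "\<lfloor>real (j + c) * \<theta>\<rfloor> = \<lfloor>real j * \<theta>\<rfloor> + \<lfloor>frac (real j * \<theta>) + real c * \<theta>\<rfloor>"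
proof -
  have "real (j + c) * \<theta> = (frac (real j * \<theta>) + real c * \<theta>) + of_int \<lfloor>real j * \<theta>\<rfloor>"
    by (simp add: frac_def algebra_simps)
  then show ?thesis by (metis floor_add_int add.commute)
qed

lemma floor_add_unit_interval:
  assumes "0 \<le> x" "x < 1"
  shows "\<lfloor>x + y\<rfloor> = \<lfloor>y\<rfloor> + (if 1 - frac y \<le> x then 1 else 0)"
proof -
  have "frac x = x" "\<lfloor>x\<rfloor> = 0" using assms by (auto simp: frac_eq floor_eq_iff)
  then show ?thesis by (auto simp: floor_add[of x y])
qed

lemma frac_mult_inj:
  assumes "\<theta> \<notin> \<rat>" "frac (real c1 * \<theta>) = frac (real c2 * \<theta>)"
  shows "c1 = c2"
proof (rule ccontr)
  assume "c1 \<noteq> c2"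
  have "(real c1 - real c2) * \<theta> = of_int (\<lfloor>real c1 * \<theta>\<rfloor> - \<lfloor>real c2 * \<theta>\<rfloor>)"
    using assms(2) by (simp add: frac_def algebra_simps)
  then have "\<theta> = of_int (\<lfloor>real c1 * \<theta>\<rfloor> - \<lfloor>real c2 * \<theta>\<rfloor>) / (real c1 - real c2)"
    using \<open>c1 \<noteq> c2\<close> by (simp add: field_simps)
  also have "\<dots> \<in> \<rat>" by (intro Rats_divide Rats_of_int Rats_diff Rats_of_nat)
  finally show False using assms(1) by simp
qed

lemma frac_mult_in_interval:
  assumes "\<theta> \<notin> \<rat>" "0 \<le> u" "u < v" "v \<le> 1"
  obtains n where "u < frac (real n * \<theta>)" "frac (real n * \<theta>) < v"
proof -
  obtain n where "\<bar>frac (real n * \<theta>) - (u + v) / 2\<bar> < (v - u) / 2"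
    using Kronecker_approx_1_explicit[OF assms(1), of "(u + v) / 2" "(v - u) / 2"] assms by auto
  then show thesis by (intro that[of n]) (auto simp: abs_less_iff field_simps)
qed

fun partial_sums :: "nat \<Rightarrow> nat list \<Rightarrow> nat list" where
  "partial_sums c [] = []"
| "partial_sums c (p # ps) = (c + p) # partial_sums (c + p) ps"

lemma length_partial_sums: "length (partial_sums c ps) = length ps"
  by (induction ps arbitrary: c) auto

lemma partial_sums_gt: "\<forall>p\<in>set ps. 0 < p \<Longrightarrow> c' \<in> set (partial_sums c ps) \<Longrightarrow> c < c'"
  by (induction ps arbitrary: c) (auto, fastforce)

lemma distinct_partial_sums: "\<forall>p\<in>set ps. 0 < p \<Longrightarrow> distinct (partial_sums c ps)"
  by (induction ps arbitrary: c) (auto dest: partial_sums_gt)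

fun floor_increments :: "real \<Rightarrow> nat list \<Rightarrow> nat \<Rightarrow> real \<Rightarrow> int list" where
  "floor_increments \<theta> [] c x = []"
| "floor_increments \<theta> (p # ps) c x =
     (\<lfloor>x + real (c + p) * \<theta>\<rfloor> - \<lfloor>x + real c * \<theta>\<rfloor>) # floor_increments \<theta> ps (c + p) x"

lemma height_profile_split_factor_at:
  assumes "0 < \<theta>" "\<theta> < 1"
  shows "map int (height_profile (split_by ps (factor_at \<theta> (j + c) (sum_list ps))))
     = floor_increments \<theta> ps c (frac (real j * \<theta>))"
proof (induction ps arbitrary: c)
  case Nil
  then show ?case by (simp add: height_profile_def)
next
  case (Cons p ps)
  have "int (count_b (factor_at \<theta> (j + c) p))
     = \<lfloor>frac (real j * \<theta>) + real (c + p) * \<theta>\<rfloor> - \<lfloor>frac (real j * \<theta>) + real c * \<theta>\<rfloor>"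
    using count_b_factor_at[OF assms, of "j + c" p]
      floor_add_nat_mult[of j "c + p" \<theta>] floor_add_nat_mult[of j c \<theta>]
    by (simp add: add.assoc)
  moreover have "map int (height_profile (split_by ps (factor_at \<theta> (j + c + p) (sum_list ps))))
     = floor_increments \<theta> ps (c + p) (frac (real j * \<theta>))"
    using Cons.IH[of "c + p"] by (simp add: add.assoc)
  ultimately show ?case
    by (simp add: take_factor_at drop_factor_at height_profile_def)
qed

lemma floor_increments_eq_iff:
  assumes "\<lfloor>x + real c * \<theta>\<rfloor> = \<lfloor>y + real c * \<theta>\<rfloor>"
  shows "floor_increments \<theta> ps c x = floor_increments \<theta> ps c y \<longleftrightarrow>
    (\<forall>c'\<in>set (partial_sums c ps). \<lfloor>x + real c' * \<theta>\<rfloor> = \<lfloor>y + real c' * \<theta>\<rfloor>)"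
  using assms
proof (induction ps arbitrary: c)
  case Nil
  then show ?case by simp
next
  case (Cons p ps)
  then show ?case
    by (cases "\<lfloor>x + real (c + p) * \<theta>\<rfloor> = \<lfloor>y + real (c + p) * \<theta>\<rfloor>") auto
qed

lemma count_le_eq_iff:
  fixes T :: "'a :: linorder set"
  assumes "finite T"
  shows "(\<forall>t\<in>T. t \<le> x \<longleftrightarrow> t \<le> y) \<longleftrightarrow> card {t\<in>T. t \<le> x} = card {t\<in>T. t \<le> y}"
proof
  assume "\<forall>t\<in>T. t \<le> x \<longleftrightarrow> t \<le> y"
  then have "{t\<in>T. t \<le> x} = {t\<in>T. t \<le> y}" by blast
  then show "card {t\<in>T. t \<le> x} = card {t\<in>T. t \<le> y}" by simp
next
  assume "card {t\<in>T. t \<le> x} = card {t\<in>T. t \<le> y}"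
  moreover have "{t\<in>T. t \<le> x} \<subseteq> {t\<in>T. t \<le> y} \<or> {t\<in>T. t \<le> y} \<subseteq> {t\<in>T. t \<le> x}"
    by (cases "x \<le> y") auto
  ultimately have "{t\<in>T. t \<le> x} = {t\<in>T. t \<le> y}"
    using assms by (metis (no_types, lifting) card_subset_eq finite_subset mem_Collect_eq subsetI)
  then show "\<forall>t\<in>T. t \<le> x \<longleftrightarrow> t \<le> y" by blast
qed

lemma interval_with_count_le:
  fixes T :: "real set"
  assumes "finite T" "T \<subseteq> {0<..<1}" "l \<le> card T"
  shows "\<exists>u v. 0 \<le> u \<and> u < v \<and> v \<le> 1 \<and> (\<forall>x. u < x \<and> x < v \<longrightarrow> card {t\<in>T. t \<le> x} = l)"
  using assms
proof (induction T arbitrary: l rule: finite_linorder_max_induct)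
  case empty
  then show ?case by (intro exI[of _ 0] exI[of _ 1]) auto
next
  case (insert z A)
  have "z \<notin> A" "0 < z" "z < 1" using insert by auto
  then have card_insert: "card (insert z A) = Suc (card A)" using insert.hyps by simp
  consider "l = Suc (card A)" | "l = card A" | "l < card A"
    using insert.prems card_insert by linarith
  then show ?case
  proof cases
    case 1
    have "{t\<in>insert z A. t \<le> x} = insert z A" if "z < x" for x
      using insert.hyps that by force
    then show ?thesis using 1 card_insert \<open>0 < z\<close> \<open>z < 1\<close>
      by (intro exI[of _ z] exI[of _ 1]) auto
  next
    case 2
    define u where "u = Max (insert 0 A)"
    have "0 \<le> u" "u < z" "\<forall>t\<in>A. t \<le> u"
      using insert.hyps \<open>0 < z\<close> unfolding u_def by auto
    then have "{t\<in>insert z A. t \<le> x} = A" if "u < x" "x < z" for x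
      using that by force
    then show ?thesis using 2 \<open>0 \<le> u\<close> \<open>u < z\<close> \<open>z < 1\<close>
      by (intro exI[of _ u] exI[of _ z]) auto
  next
    case 3
    then obtain u v where uv: "0 \<le> u" "u < v" "v \<le> 1"
      "\<forall>x. u < x \<and> x < v \<longrightarrow> card {t\<in>A. t \<le> x} = l"
      using insert.IH[of l] insert.prems by auto
    have "u < z"
    proof (rule ccontr)
      assume "\<not> u < z"
      define x where "x = (u + v) / 2"
      have "u < x" "x < v" using uv(2) by (auto simp: x_def)
      then have "card {t\<in>A. t \<le> x} = l" using uv(4) by blast
      moreover have "{t\<in>A. t \<le> x} = A" using insert.hyps \<open>\<not> u < z\<close> \<open>u < x\<close> by force
      ultimately show False using 3 by simp
    qed
    moreover have "{t\<in>insert z A. t \<le> x} = {t\<in>A. t \<le> x}" if "x < z" for x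
      using that by auto
    ultimately show ?thesis using uv
      by (intro exI[of _ u] exI[of _ "min v z"]) auto
  qed
qed

lemma card_range_eq_if_same_kernel:
  assumes "\<And>i j. f i = f j \<longleftrightarrow> g i = g j"
  shows "card (range f) = card (range g)"
proof -
  let ?h = "\<lambda>y. f (inv g y)"
  have h: "?h (g i) = f i" for i
    using assms f_inv_into_f[of "g i" g UNIV] by blast
  have "range f = ?h ` range g" using h by (auto simp: image_iff)
  moreover have "inj_on ?h (range g)"
    by (rule inj_onI) (metis h assms imageE)
  ultimately show ?thesis by (simp add: card_image)
qed

definition profile_at :: "real \<Rightarrow> nat list \<Rightarrow> nat \<Rightarrow> nat list" where
  "profile_at \<theta> ps j = height_profile (split_by ps (factor_at \<theta> j (sum_list ps)))"

lemma card_varieties: "card (varieties \<theta> ps) = card (range (profile_at \<theta> ps))"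
proof -
  have "inj_on (\<lambda>h. {U \<in> partitioned_factors \<theta> ps. height_profile U = h})
           (height_profile ` partitioned_factors \<theta> ps)"
    by (rule inj_onI) blast
  moreover have "height_profile ` partitioned_factors \<theta> ps = range (profile_at \<theta> ps)"
    unfolding partitioned_factors_def factors_def profile_at_def by auto
  ultimately show ?thesis unfolding varieties_def by (simp add: card_image)
qed

definition thresholds :: "real \<Rightarrow> nat list \<Rightarrow> real set" where
  "thresholds \<theta> ps = (\<lambda>c. 1 - frac (real c * \<theta>)) ` set (partial_sums 0 ps)"

definition threshold_count :: "real \<Rightarrow> nat list \<Rightarrow> real \<Rightarrow> nat" where
  "threshold_count \<theta> ps x = card {t \<in> thresholds \<theta> ps. t \<le> x}"

lemma finite_thresholds: "finite (thresholds \<theta> ps)"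
  by (simp add: thresholds_def)

lemma profile_at_eq_iff:
  assumes "0 < \<theta>" "\<theta> < 1"
  shows "profile_at \<theta> ps i = profile_at \<theta> ps j \<longleftrightarrow>
    threshold_count \<theta> ps (frac (real i * \<theta>)) = threshold_count \<theta> ps (frac (real j * \<theta>))"
proof -
  let ?x = "frac (real i * \<theta>)" and ?y = "frac (real j * \<theta>)"
  have unit: "0 \<le> ?x" "?x < 1" "0 \<le> ?y" "?y < 1" by (auto simp: frac_lt_1)
  then have floor0: "\<lfloor>?x\<rfloor> = 0" "\<lfloor>?y\<rfloor> = 0" by (auto simp: floor_eq_iff)
  have "profile_at \<theta> ps i = profile_at \<theta> ps j \<longleftrightarrow>
      map int (profile_at \<theta> ps i) = map int (profile_at \<theta> ps j)"
    by (simp add: inj_map_eq_map inj_on_def)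
  also have "\<dots> \<longleftrightarrow> floor_increments \<theta> ps 0 ?x = floor_increments \<theta> ps 0 ?y"
    using height_profile_split_factor_at[OF assms, of ps i 0]
      height_profile_split_factor_at[OF assms, of ps j 0]
    by (simp add: profile_at_def)
  also have "\<dots> \<longleftrightarrow>
      (\<forall>c\<in>set (partial_sums 0 ps). \<lfloor>?x + real c * \<theta>\<rfloor> = \<lfloor>?y + real c * \<theta>\<rfloor>)"
    using floor0 by (intro floor_increments_eq_iff) simp
  also have "\<dots> \<longleftrightarrow> (\<forall>t\<in>thresholds \<theta> ps. t \<le> ?x \<longleftrightarrow> t \<le> ?y)"
    using floor_add_unit_interval[OF unit(1,2)] floor_add_unit_interval[OF unit(3,4)]
    by (auto simp: thresholds_def)
  also have "\<dots> \<longleftrightarrow> threshold_count \<theta> ps ?x = threshold_count \<theta> ps ?y"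
    unfolding threshold_count_def by (rule count_le_eq_iff[OF finite_thresholds])
  finally show ?thesis .
qed

lemma card_thresholds:
  assumes "\<theta> \<notin> \<rat>" "\<forall>p\<in>set ps. 0 < p"
  shows "card (thresholds \<theta> ps) = length ps"
proof -
  have "inj_on (\<lambda>c. 1 - frac (real c * \<theta>)) (set (partial_sums 0 ps))"
    by (rule inj_onI) (use frac_mult_inj[OF assms(1)] in auto)
  then show ?thesis
    using distinct_card[OF distinct_partial_sums[OF assms(2)]]
    by (simp add: thresholds_def card_image length_partial_sums)
qed

lemma thresholds_subset:
  assumes "\<theta> \<notin> \<rat>" "\<forall>p\<in>set ps. 0 < p"
  shows "thresholds \<theta> ps \<subseteq> {0<..<1}"
proof
  fix t assume "t \<in> thresholds \<theta> ps"
  then obtain c where c: "c \<in> set (partial_sums 0 ps)" "t = 1 - frac (real c * \<theta>)"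
    unfolding thresholds_def by auto
  have "frac (real c * \<theta>) \<noteq> 0"
    using frac_mult_inj[OF assms(1), of c 0] partial_sums_gt[OF assms(2) c(1)] by auto
  then show "t \<in> {0<..<1}" using c frac_ge_0[of "real c * \<theta>"] frac_lt_1[of "real c * \<theta>"]
    by auto
qed

lemma range_threshold_count:
  assumes "\<theta> \<notin> \<rat>" "\<forall>p\<in>set ps. 0 < p"
  shows "range (\<lambda>j. threshold_count \<theta> ps (frac (real j * \<theta>))) = {0..length ps}"
proof
  have "threshold_count \<theta> ps x \<le> length ps" for x
    unfolding threshold_count_def card_thresholds[OF assms, symmetric]
    by (rule card_mono[OF finite_thresholds]) auto
  then show "range (\<lambda>j. threshold_count \<theta> ps (frac (real j * \<theta>))) \<subseteq> {0..length ps}"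
    by auto
next
  show "{0..length ps} \<subseteq> range (\<lambda>j. threshold_count \<theta> ps (frac (real j * \<theta>)))"
  proof
    fix l assume "l \<in> {0..length ps}"
    then have "l \<le> card (thresholds \<theta> ps)" using card_thresholds[OF assms] by simp
    then obtain u v where uv: "0 \<le> u" "u < v" "v \<le> 1"
      "\<forall>x. u < x \<and> x < v \<longrightarrow> threshold_count \<theta> ps x = l"
      using interval_with_count_le[OF finite_thresholds thresholds_subset[OF assms]]
      unfolding threshold_count_def by blast
    obtain n where "u < frac (real n * \<theta>)" "frac (real n * \<theta>) < v"
      using frac_mult_in_interval[OF assms(1) uv(1-3)] .
    with uv(4) have "l = threshold_count \<theta> ps (frac (real n * \<theta>))" by simp
    then show "l \<in> range (\<lambda>j. threshold_count \<theta> ps (frac (real j * \<theta>)))"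
      by (rule range_eqI)
  qed
qed

theorem mainTheorem4:
  fixes \<theta> :: real and m k :: nat and ps :: "nat list"
  assumes "\<theta> \<notin> \<rat>" and "0 < \<theta>" and "\<theta> < 1"
    and "1 \<le> m" and "1 \<le> k" and "k \<le> m"
    and "ordered_partition ps m k"
  shows "card (varieties \<theta> ps) = k + 1"
proof -
  have len: "length ps = k" and pos: "\<forall>p\<in>set ps. 0 < p"
    using assms(7) unfolding ordered_partition_def by auto
  have "card (varieties \<theta> ps) = card (range (profile_at \<theta> ps))"
    by (rule card_varieties)
  also have "\<dots> = card (range (\<lambda>j. threshold_count \<theta> ps (frac (real j * \<theta>))))"
    by (rule card_range_eq_if_same_kernel) (rule profile_at_eq_iff[OF assms(2,3)])
  also have "\<dots> = k + 1"
    using range_threshold_count[OF assms(1) pos] len by simp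
  finally show ?thesis .
qed

end
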